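(* Let $(X;Y,Z)$ be a subwing triple (degenerate or non-degenerate) in $\mathcal{C}_n$, and let $W\in\mathcal{W}_X$ be indecomposable. (i) If $Y\neq0$: $Y$ and $W$ are compatible if and only if $W\in\mathcal{W}_Y\cup\mathcal{W}_Z$ or $W\in\mathbf{R}_Y$. (ii) If $Z\neq0$: $Z$ and $W$ are compatible if and only if $W\in\mathcal{W}_Y\cup\mathcal{W}_Z$ or $W\in\mathbf{C}_Z$.
   Context: Let $k$ be algebraically closed, $n\ge2$, $\mathcal{T}_n$ the tube of rank $n$ (finite-dimensional nilpotent representations of the cyclically oriented $\tilde A_{n-1}$-quiver; AR-translation $\tau$), $\mathcal{C}_n=D^b(\mathcal{T}_n)/\tau^{-1}[1]$ the cluster tube (a 2-Calabi–Yau triangulated category), with indecomposables identified with those of $\mathcal{T}_n$. Indecomposables have coordinates $(a,b)$, $a\in\mathbb{Z}/n$, $b\ge1$ the quasilength, with $\tau(a,b)=(a-1,b)$ and irreducible maps $(a,b)\to(a,b+1)$ and $(a,b)\to(a+1,b-1)$. The ray $\mathbf{R}_{(a,i)}$ is $\{(a,i+j):j\ge0\}$; the coray $\mathbf{C}_{(a,i)}$ is $\{(a-j,i+j):j\ge0\}$. For $X=(a,i)$, $i\le n-1$, the wing $\mathcal{W}_X$ is $\{(a+s,i'):s\ge0,i'\ge1,s+i'\le i\}$; $\mathcal{W}_0=\emptyset$. Indecomposables $X,Y$ are compatible if $\operatorname{Ext}^1_{\mathcal{C}_n}(X,Y)=\operatorname{Ext}^1_{\mathcal{C}_n}(Y,X)=0$.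 A non-degenerate subwing triple $(X;Y,Z)$: $X=(a,b)$ with $3\le b\le n-1$, $Y=(a,c)$, $Z=(a+c+1,b-c-1)$ for some $1\le c\le b-2$. A degenerate subwing triple $(X;Y,Z)$: $X=(a,b)$ with $2\le b\le n-1$ and either $Y=(a,b-1)$, $Z=0$, or $Y=0$, $Z=(a+1,b-1)$. *)

theory Defs
  imports Main
begin

text \<open>An indecomposable is a pair (a,b) :: int \<times> nat with 0 \<le> a < n (vertex, read mod n)
  and quasilength b \<ge> 1.  Following the irreducible maps (a,b) -> (a,b+1) (mono) and
  (a,b) -> (a+1,b-1) (epi), (a,b) is the uniserial module with socle S_a and
  composition factors S_a, S_(a+1), ..., S_(a+b-1) (top).  A possibly-zero object
  (Y, Z in a degenerate triple) is an option; None is the zero object.\<close>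

definition ind :: "nat \<Rightarrow> int \<times> nat \<Rightarrow> bool" where
  "ind n X \<longleftrightarrow> 0 \<le> fst X \<and> fst X < int n \<and> 1 \<le> snd X"

definition tau :: "nat \<Rightarrow> int \<times> nat \<Rightarrow> int \<times> nat" where
  "tau n X = ((fst X - 1) mod int n, snd X)"

text \<open>dim Hom_T((c,d),(a,b)): a nonzero map between uniserials is determined (up to scalar,
  modulo shorter ones) by an image of length k, which is the length-k quotient
  (c+d-k, k) of the source and must equal the length-k submodule (a,k) of the target.\<close>
definition homdim :: "nat \<Rightarrow> int \<times> nat \<Rightarrow> int \<times> nat \<Rightarrow> nat" where
  "homdim n M N = card {k::nat. 1 \<le> k \<and> k \<le> min (snd M) (snd N) \<and>
      (fst M + int (snd M) - int k) mod int n = fst N mod int n}"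

text \<open>Auslander-Reiten formula in the hereditary category T_n:
  dim Ext^1_T(X,Y) = dim Hom_T(Y, tau X).\<close>
definition ext1_T :: "nat \<Rightarrow> int \<times> nat \<Rightarrow> int \<times> nat \<Rightarrow> nat" where
  "ext1_T n X Y = homdim n Y (tau n X)"

text \<open>In C_n = D^b(T_n)/tau^{-1}[1]:  Ext^1_C(X,Y) = Ext^1_T(X,Y) \<oplus> D Ext^1_T(Y,X).\<close>
definition ext1_C :: "nat \<Rightarrow> int \<times> nat \<Rightarrow> int \<times> nat \<Rightarrow> nat" where
  "ext1_C n X Y = ext1_T n X Y + ext1_T n Y X"

definition compatible :: "nat \<Rightarrow> int \<times> nat \<Rightarrow> int \<times> nat \<Rightarrow> bool" where
  "compatible n X Y \<longleftrightarrow> ext1_C n X Y = 0 \<and> ext1_C n Y X = 0"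

definition wing :: "nat \<Rightarrow> int \<times> nat \<Rightarrow> (int \<times> nat) set" where
  "wing n X = {((fst X + int s) mod int n, i') | s i'. 1 \<le> i' \<and> s + i' \<le> snd X}"

definition wing_opt :: "nat \<Rightarrow> (int \<times> nat) option \<Rightarrow> (int \<times> nat) set" where
  "wing_opt n Y = (case Y of None \<Rightarrow> {} | Some X \<Rightarrow> wing n X)"

definition ray :: "nat \<Rightarrow> int \<times> nat \<Rightarrow> (int \<times> nat) set" where
  "ray n X = {(fst X, snd X + j) | j. True}"

definition coray :: "nat \<Rightarrow> int \<times> nat \<Rightarrow> (int \<times> nat) set" where
  "coray n X = {((fst X - int j) mod int n, snd X + j) | j. True}"

definition nondeg_subwing_triple ::
  "nat \<Rightarrow> int \<times> nat \<Rightarrow> (int \<times> nat) option \<Rightarrow> (int \<times> nat) option \<Rightarrow> bool" where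
  "nondeg_subwing_triple n X Y Z \<longleftrightarrow>
     (\<exists>a b c. X = (a, b) \<and> 0 \<le> a \<and> a < int n \<and> 3 \<le> b \<and> b \<le> n - 1 \<and>
        1 \<le> c \<and> c \<le> b - 2 \<and> Y = Some (a, c) \<and>
        Z = Some ((a + int c + 1) mod int n, b - c - 1))"

definition deg_subwing_triple ::
  "nat \<Rightarrow> int \<times> nat \<Rightarrow> (int \<times> nat) option \<Rightarrow> (int \<times> nat) option \<Rightarrow> bool" where
  "deg_subwing_triple n X Y Z \<longleftrightarrow>
     (\<exists>a b. X = (a, b) \<and> 0 \<le> a \<and> a < int n \<and> 2 \<le> b \<and> b \<le> n - 1 \<and>
        ((Y = Some (a, b - 1) \<and> Z = None) \<or>
         (Y = None \<and> Z = Some ((a + 1) mod int n, b - 1))))"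

definition subwing_triple ::
  "nat \<Rightarrow> int \<times> nat \<Rightarrow> (int \<times> nat) option \<Rightarrow> (int \<times> nat) option \<Rightarrow> bool" where
  "subwing_triple n X Y Z \<longleftrightarrow> nondeg_subwing_triple n X Y Z \<or> deg_subwing_triple n X Y Z"

end

theory Submission
  imports Defs
begin

text \<open>Write \<open>X = (a, b)\<close> and place every object of the wing of \<open>X\<close> at coordinates relative
  to \<open>a\<close>: \<open>W = (a + s, i)\<close> with \<open>s + i \<le> b < n\<close>. Every residue that occurs then lies in a window
  of fewer than \<open>n\<close> consecutive integers, so congruences mod \<open>n\<close> become equalities, and
  membership in wings, rays and corays as well as the vanishing of the Hom-spaces computing
  \<open>Ext\<^sup>1\<close> become linear conditions on \<open>s\<close> and \<open>i\<close>. Every subwing triple is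
  \<open>(X; (a, c), (a + c + 1, b - c - 1))\<close> with the objects of length zero dropped, and both
  equivalences are then a comparison of these linear conditions.\<close>

lemma mod_eq_iff_eq_of_dist_less:
  fixes p q n :: int
  assumes "0 < n" "\<bar>p - q\<bar> < n"
  shows "p mod n = q mod n \<longleftrightarrow> p = q"
proof
  assume "p mod n = q mod n"
  then have "n dvd p - q" by (simp add: mod_eq_dvd_iff)
  then show "p = q" using assms dvd_imp_le_int[of "p - q" n] by force
qed simp

lemma homdim_eq_0_iff:
  assumes n: "0 < n"
    and p: "p' mod int n = p mod int n" and q: "q' mod int n = q mod int n"
    and close: "\<And>k. 1 \<le> k \<Longrightarrow> k \<le> min l m \<Longrightarrow> \<bar>p + (int l - int k) - q\<bar> < int n"
  shows "homdim n (p', l) (q', m) = 0 \<longleftrightarrow>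
          (\<forall>k. 1 \<le> k \<and> k \<le> min l m \<longrightarrow> p + (int l - int k) \<noteq> q)"
proof -
  have fin: "finite {k::nat. 1 \<le> k \<and> k \<le> min l m \<and>
      (p' + int l - int k) mod int n = q' mod int n}"
    by (rule finite_subset[of _ "{..min l m}"]) auto
  have shift: "(p' + int l - int k) mod int n = (p + (int l - int k)) mod int n" for k
  proof -
    have "(p' + int l - int k) mod int n = (p' + (int l - int k)) mod int n"
      by (simp add: algebra_simps)
    also have "\<dots> = (p' mod int n + (int l - int k)) mod int n" by (simp add: mod_add_left_eq)
    finally show ?thesis using p by (simp add: mod_add_left_eq)
  qed
  have "homdim n (p', l) (q', m) = 0 \<longleftrightarrow>
      (\<forall>k. 1 \<le> k \<and> k \<le> min l m \<longrightarrow> (p' + int l - int k) mod int n \<noteq> q' mod int n)"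
    unfolding homdim_def using fin by auto
  also have "\<dots> \<longleftrightarrow> (\<forall>k. 1 \<le> k \<and> k \<le> min l m \<longrightarrow> p + (int l - int k) \<noteq> q)"
    using mod_eq_iff_eq_of_dist_less[of "int n"] n close unfolding shift q by auto
  finally show ?thesis .
qed

lemma compatible_iff_homdim:
  "compatible n Y W \<longleftrightarrow> homdim n W (tau n Y) = 0 \<and> homdim n Y (tau n W) = 0"
  by (auto simp: compatible_def ext1_C_def ext1_T_def)

lemma wing_length_0 [simp]: "wing n (p, 0) = {}"
  by (auto simp: wing_def)


lemma mem_wing_coord_iff:
  fixes a z :: int and s i t l n :: nat
  assumes "0 < n" "z mod int n = (a + int t) mod int n" "s < n" "t + l < n"
  shows "((a + int s) mod int n, i) \<in> wing n (z, l) \<longleftrightarrow> t \<le> s \<and> 1 \<le> i \<and> (s - t) + i \<le> l"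
proof -
  have vertex: "(z + int s') mod int n = (a + int s) mod int n \<longleftrightarrow> t + s' = s" if "s' \<le> l" for s'
  proof -
    have "(z + int s') mod int n = (a + int t + int s') mod int n"
      using assms(2) by (metis mod_add_left_eq)
    also have "\<dots> = (a + int s) mod int n \<longleftrightarrow> a + int t + int s' = a + int s"
      by (rule mod_eq_iff_eq_of_dist_less) (use assms that in auto)
    finally show ?thesis by linarith
  qed
  show ?thesis
  proof
    assume "((a + int s) mod int n, i) \<in> wing n (z, l)"
    then obtain s' where "(z + int s') mod int n = (a + int s) mod int n" "1 \<le> i" "s' + i \<le> l"
      unfolding wing_def by auto
    then show "t \<le> s \<and> 1 \<le> i \<and> (s - t) + i \<le> l" using vertex[of s'] by auto
  next
    assume h: "t \<le> s \<and> 1 \<le> i \<and> (s - t) + i \<le> l"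
    then have "((a + int s) mod int n, i) = ((z + int (s - t)) mod int n, i)"
      using vertex[of "s - t"] by auto
    then show "((a + int s) mod int n, i) \<in> wing n (z, l)"
      unfolding wing_def fst_conv snd_conv mem_Collect_eq using h by blast
  qed
qed

lemma mem_ray_coord_iff:
  fixes a :: int and s i c n :: nat
  assumes "0 \<le> a" "a < int n" "s < n"
  shows "((a + int s) mod int n, i) \<in> ray n (a, c) \<longleftrightarrow> s = 0 \<and> c \<le> i"
proof -
  have "(a + int s) mod int n = a \<longleftrightarrow> (a + int s) mod int n = a mod int n" using assms by simp
  also have "\<dots> \<longleftrightarrow> s = 0" by (subst mod_eq_iff_eq_of_dist_less) (use assms in auto)
  finally show ?thesis unfolding ray_def by (auto simp: le_iff_add)
qed

lemma mem_coray_coord_iff: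
  fixes a :: int and s i c d n :: nat
  assumes "0 < n" "s + i < n" "c + 1 + d < n"
  shows "((a + int s) mod int n, i) \<in> coray n ((a + int c + 1) mod int n, d) \<longleftrightarrow>
           d \<le> i \<and> s + i = c + 1 + d"
proof -
  have vertex: "((a + int c + 1) mod int n - int j) mod int n = (a + int s) mod int n \<longleftrightarrow> c + 1 = s + j"
    if "j \<le> i" for j
  proof -
    have "((a + int c + 1) mod int n - int j) mod int n = (a + int c + 1 - int j) mod int n"
      by (simp add: mod_diff_left_eq)
    also have "\<dots> = (a + int s) mod int n \<longleftrightarrow> a + int c + 1 - int j = a + int s"
      by (rule mod_eq_iff_eq_of_dist_less) (use assms that in auto)
    finally show ?thesis by auto
  qed
  show ?thesis
  proof
    assume "((a + int s) mod int n, i) \<in> coray n ((a + int c + 1) mod int n, d)"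
    then obtain j where "(a + int s) mod int n = ((a + int c + 1) mod int n - int j) mod int n"
        "i = d + j"
      unfolding coray_def by auto
    then show "d \<le> i \<and> s + i = c + 1 + d" using vertex[of j] by auto
  next
    assume h: "d \<le> i \<and> s + i = c + 1 + d"
    then have "((a + int s) mod int n, i) =
        (((a + int c + 1) mod int n - int (i - d)) mod int n, d + (i - d))"
      using vertex[of "i - d"] by auto
    then show "((a + int s) mod int n, i) \<in> coray n ((a + int c + 1) mod int n, d)"
      unfolding coray_def fst_conv snd_conv mem_Collect_eq by blast
  qed
qed

lemma compatible_left_coord_iff:
  fixes a :: int and s i c b n :: nat
  assumes "s + i \<le> b" "b < n" "1 \<le> i" "c < n"
  shows "compatible n (a, c) ((a + int s) mod int n, i) \<longleftrightarrow> s = 0 \<or> c < s \<or> s + i \<le> c"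
proof -
  have "homdim n ((a + int s) mod int n, i) (tau n (a, c)) = 0"
    unfolding tau_def fst_conv snd_conv
    by (subst homdim_eq_0_iff[where p="a + int s" and q="a - 1"]) (use assms in auto)
  moreover have "homdim n (a, c) (tau n ((a + int s) mod int n, i)) = 0 \<longleftrightarrow>
      (\<forall>k. 1 \<le> k \<and> k \<le> min c i \<longrightarrow> a + (int c - int k) \<noteq> a + int s - 1)"
    unfolding tau_def fst_conv snd_conv
    by (rule homdim_eq_0_iff) (use assms in \<open>auto simp: mod_simps\<close>)
  moreover have "(\<forall>k. 1 \<le> k \<and> k \<le> min c i \<longrightarrow> a + (int c - int k) \<noteq> a + int s - 1)
      \<longleftrightarrow> s = 0 \<or> c < s \<or> s + i \<le> c"
    by presburger
  ultimately show ?thesis unfolding compatible_iff_homdim by simp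
qed

lemma compatible_right_coord_iff:
  fixes a :: int and s i c d b n :: nat
  assumes "s + i \<le> b" "b < n" "1 \<le> i" "c + 1 + d = b"
  shows "compatible n ((a + int c + 1) mod int n, d) ((a + int s) mod int n, i) \<longleftrightarrow>
           \<not> (s \<le> c \<and> c < s + i \<and> s + i \<le> c + d)"
proof -
  have "homdim n ((a + int s) mod int n, i) (tau n ((a + int c + 1) mod int n, d)) = 0 \<longleftrightarrow>
      (\<forall>k. 1 \<le> k \<and> k \<le> min i d \<longrightarrow> a + int s + (int i - int k) \<noteq> a + int c)"
    unfolding tau_def fst_conv snd_conv
    by (rule homdim_eq_0_iff) (use assms in \<open>auto simp: mod_simps\<close>)
  moreover have "homdim n ((a + int c + 1) mod int n, d) (tau n ((a + int s) mod int n, i)) = 0"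
    unfolding tau_def fst_conv snd_conv
    by (subst homdim_eq_0_iff[where p="a + int c + 1" and q="a + int s - 1"])
      (use assms in \<open>auto simp: mod_simps\<close>)
  moreover have "(\<forall>k. 1 \<le> k \<and> k \<le> min i d \<longrightarrow> a + int s + (int i - int k) \<noteq> a + int c)
      \<longleftrightarrow> \<not> (s \<le> c \<and> c < s + i \<and> s + i \<le> c + d)"
    by presburger
  ultimately show ?thesis unfolding compatible_iff_homdim by simp
qed


lemma compatible_left_iff:
  fixes a :: int and b c n :: nat
  assumes a: "0 \<le> a" "a < int n" and cb: "c < b" "b < n" and W: "W \<in> wing n (a, b)"
  defines "Z \<equiv> ((a + int c + 1) mod int n, b - c - 1)"
  shows "compatible n (a, c) W \<longleftrightarrow> W \<in> wing n (a, c) \<union> wing n Z \<or> W \<in> ray n (a, c)"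
proof -
  obtain s i where W: "W = ((a + int s) mod int n, i)" "1 \<le> i" "s + i \<le> b"
    using W unfolding wing_def by auto
  have "W \<in> wing n (a, c) \<longleftrightarrow> s + i \<le> c"
    unfolding W(1) by (subst mem_wing_coord_iff[where t=0]) (use W cb in auto)
  moreover have "W \<in> wing n Z \<longleftrightarrow> c < s"
    unfolding W(1) Z_def
    by (subst mem_wing_coord_iff[where t="Suc c"]) (use W cb in \<open>auto simp: mod_simps ac_simps\<close>)
  moreover have "W \<in> ray n (a, c) \<longleftrightarrow> s = 0 \<and> c \<le> i"
    unfolding W(1) by (rule mem_ray_coord_iff) (use a W cb in auto)
  moreover have "compatible n (a, c) W \<longleftrightarrow> s = 0 \<or> c < s \<or> s + i \<le> c"
    unfolding W(1) by (rule compatible_left_coord_iff) (use W cb in auto)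
  ultimately show ?thesis by auto
qed

lemma compatible_right_iff:
  fixes a :: int and b c n :: nat
  assumes cb: "c < b" "b < n" and W: "W \<in> wing n (a, b)"
  defines "Z \<equiv> ((a + int c + 1) mod int n, b - c - 1)"
  shows "compatible n Z W \<longleftrightarrow> W \<in> wing n (a, c) \<union> wing n Z \<or> W \<in> coray n Z"
proof -
  obtain s i where W: "W = ((a + int s) mod int n, i)" "1 \<le> i" "s + i \<le> b"
    using W unfolding wing_def by auto
  have d: "c + 1 + (b - c - 1) = b" using cb by simp
  have "W \<in> wing n (a, c) \<longleftrightarrow> s + i \<le> c"
    unfolding W(1) by (subst mem_wing_coord_iff[where t=0]) (use W cb in auto)
  moreover have "W \<in> wing n Z \<longleftrightarrow> c < s"
    unfolding W(1) Z_def
    by (subst mem_wing_coord_iff[where t="Suc c"]) (use W cb in \<open>auto simp: mod_simps ac_simps\<close>)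
  moreover have "W \<in> coray n Z \<longleftrightarrow> b - c - 1 \<le> i \<and> s + i = b"
    unfolding W(1) Z_def by (subst mem_coray_coord_iff) (use W cb in auto)
  moreover have "compatible n Z W \<longleftrightarrow> \<not> (s \<le> c \<and> c < s + i \<and> s + i \<le> c + (b - c - 1))"
    unfolding W(1) Z_def by (rule compatible_right_coord_iff[OF _ _ _ d]) (use W cb in auto)
  ultimately show ?thesis using W cb by auto
qed

lemma subwing_triple_normal_form:
  assumes "subwing_triple n X Y Z"
  obtains a b c where "X = (a, b)" "0 \<le> a" "a < int n" "c < b" "b < n"
    "Y = None \<or> Y = Some (a, c)"
    "Z = None \<or> Z = Some ((a + int c + 1) mod int n, b - c - 1)"
    "wing_opt n Y \<union> wing_opt n Z = wing n (a, c) \<union> wing n ((a + int c + 1) mod int n, b - c - 1)"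
proof -
  consider (nondeg) a b c where "X = (a, b)" "0 \<le> a" "a < int n" "c + 2 \<le> b" "b < n"
      "Y = Some (a, c)" "Z = Some ((a + int c + 1) mod int n, b - c - 1)"
    | (no_Z) a b where "X = (a, b)" "0 \<le> a" "a < int n" "2 \<le> b" "b < n"
      "Y = Some (a, b - 1)" "Z = None"
    | (no_Y) a b where "X = (a, b)" "0 \<le> a" "a < int n" "2 \<le> b" "b < n"
      "Y = None" "Z = Some ((a + int 0 + 1) mod int n, b - 0 - 1)"
    using assms unfolding subwing_triple_def nondeg_subwing_triple_def deg_subwing_triple_def
    by fastforce
  then show thesis
  proof cases
    case (nondeg a b c)
    then show thesis by (intro that[of a b c]) (auto simp: wing_opt_def)
  next
    case (no_Z a b)
    then show thesis by (intro that[of a b "b - 1"]) (auto simp: wing_opt_def)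
  next
    case (no_Y a b)
    then show thesis by (intro that[of a b 0]) (auto simp: wing_opt_def)
  qed
qed

theorem lemma2p3:
  fixes n :: nat and X W :: "int \<times> nat" and Y Z :: "(int \<times> nat) option"
  assumes "n \<ge> 2"
    and "subwing_triple n X Y Z"
    and "W \<in> wing n X"
  shows "(\<forall>y. Y = Some y \<longrightarrow>
            (compatible n y W \<longleftrightarrow> W \<in> wing_opt n Y \<union> wing_opt n Z \<or> W \<in> ray n y))
       \<and> (\<forall>z. Z = Some z \<longrightarrow>
            (compatible n z W \<longleftrightarrow> W \<in> wing_opt n Y \<union> wing_opt n Z \<or> W \<in> coray n z))"
proof -
  obtain a b c where X: "X = (a, b)" "0 \<le> a" "a < int n" "c < b" "b < n"
      and Y: "Y = None \<or> Y = Some (a, c)"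
      and Z: "Z = None \<or> Z = Some ((a + int c + 1) mod int n, b - c - 1)"
      and wings: "wing_opt n Y \<union> wing_opt n Z =
                    wing n (a, c) \<union> wing n ((a + int c + 1) mod int n, b - c - 1)"
    using subwing_triple_normal_form[OF assms(2)] by blast
  have W: "W \<in> wing n (a, b)" using assms(3) X(1) by simp
  show ?thesis
    unfolding wings
    using Y Z compatible_left_iff[OF X(2-5) W] compatible_right_iff[OF X(4,5) W] by auto
qed

end
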